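(* Let $\mathbb{K}$ be a field of characteristic $0$ and let $L=\sum_{i=0}^{J}a_i(n)\sigma^i$ with $a_i(n)\in\mathbb{K}[n]$ not all zero, and let $d_L=\max_{0\le i\le J}\{\deg a_i(n)\}$. Then $\deg L\le d_L$, and if $\deg L=d_L$ then $L$ is nondegenerated.
   Context: $\sigma$ is the shift operator. Put $b_k(n)=\sum_{j=k}^{J}\binom{j}{k}a_{J-j}(n+j-J)$ for $0\le k\le J$ and $d=\deg L=\max_{0\le k\le J}\{\deg b_k(n)-k\}$. Let $f(s)=\sum_{k=0}^{J}[n^{d+k}](b_k(n))\,s^{\underline{k}}$, where $[n^m](b)$ is the coefficient of $n^m$ in $b$ and $s^{\underline{k}}=s(s-1)\cdots(s-k+1)$, and $R_L=\{s\in\mathbb{N}=\{0,1,2,\dots\}:f(s)=0\}$. $L$ is degenerated if $R_L\neq\emptyset$ and nondegenerated otherwise. *)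

theory Defs
  imports "HOL-Computational_Algebra.Polynomial"
begin

text \<open>Operator L = sum_{i=0}^J a_i(n) sigma^i, given by coefficient function a and order J.\<close>

definition shift_poly :: "'a::comm_ring_1 poly \<Rightarrow> int \<Rightarrow> 'a poly" where
  "shift_poly p c = pcompose p [:of_int c, 1:]"

definition bcoef :: "(nat \<Rightarrow> 'a::comm_ring_1 poly) \<Rightarrow> nat \<Rightarrow> nat \<Rightarrow> 'a poly" where
  "bcoef a J k = (\<Sum>j=k..J. of_nat (j choose k) * shift_poly (a (J - j)) (int j - int J))"

text \<open>deg L = max_k (deg b_k - k), the degree of the zero polynomial being -infinity,
  i.e. only nonzero b_k contribute.\<close>
definition degL :: "(nat \<Rightarrow> 'a::comm_ring_1 poly) \<Rightarrow> nat \<Rightarrow> int" where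
  "degL a J = Max {int (degree (bcoef a J k)) - int k | k. k \<le> J \<and> bcoef a J k \<noteq> 0}"

definition dL :: "(nat \<Rightarrow> 'a::zero poly) \<Rightarrow> nat \<Rightarrow> nat" where
  "dL a J = Max {degree (a i) | i. i \<le> J}"

definition coeff_int :: "'a::zero poly \<Rightarrow> int \<Rightarrow> 'a" where
  "coeff_int p m = (if m < 0 then 0 else coeff p (nat m))"

definition falling :: "'a::comm_ring_1 \<Rightarrow> nat \<Rightarrow> 'a" where
  "falling s k = (\<Prod>i<k. s - of_nat i)"

definition indicial :: "(nat \<Rightarrow> 'a::comm_ring_1 poly) \<Rightarrow> nat \<Rightarrow> 'a \<Rightarrow> 'a" where
  "indicial a J s = (\<Sum>k\<le>J. coeff_int (bcoef a J k) (degL a J + int k) * falling s k)"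

definition RL :: "(nat \<Rightarrow> 'a::comm_ring_1 poly) \<Rightarrow> nat \<Rightarrow> nat set" where
  "RL a J = {s. indicial a J (of_nat s) = 0}"

definition degenerated :: "(nat \<Rightarrow> 'a::comm_ring_1 poly) \<Rightarrow> nat \<Rightarrow> bool" where
  "degenerated a J \<longleftrightarrow> RL a J \<noteq> {}"

definition nondegenerated :: "(nat \<Rightarrow> 'a::comm_ring_1 poly) \<Rightarrow> nat \<Rightarrow> bool" where
  "nondegenerated a J \<longleftrightarrow> \<not> degenerated a J"

end

theory Submission
  imports Defs
begin

text \<open>Each b_k is a combination of shifts of the a_i, so deg b_k <= d_L and hence deg L <= d_L;
  and not all b_k vanish, since for the largest j with a_(J-j) \<noteq> 0 the polynomial b_j is a shift
  of a_(J-j). If deg L = d_L, the maximum of deg b_k - k is attained only at k = 0, while for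
  k >= 1 the coefficient of n^(d+k) in b_k vanishes. So f is the constant leading coefficient of
  b_0, which has no roots. Characteristic 0 plays no role: the argument works over any integral domain.\<close>

lemma degree_shift_poly [simp]: "degree (shift_poly (p :: 'a::idom poly) c) = degree p"
  unfolding shift_poly_def by (simp add: degree_pcompose)

lemma shift_poly_eq_0_iff [simp]: "shift_poly (p :: 'a::idom poly) c = 0 \<longleftrightarrow> p = 0"
  unfolding shift_poly_def by (simp add: pcompose_eq_0_iff)

lemma degree_le_dL: "i \<le> J \<Longrightarrow> degree (a i) \<le> dL a J"
  unfolding dL_def by (rule Max_ge) auto

lemma degree_bcoef_le_dL:
  fixes a :: "nat \<Rightarrow> 'a::idom poly"
  shows "degree (bcoef a J k) \<le> dL a J"
  unfolding bcoef_def
proof (rule degree_sum_le)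
  fix j assume "j \<in> {k..J}"
  have "degree (of_nat (j choose k) * shift_poly (a (J - j)) (int j - int J))
        \<le> degree (of_nat (j choose k) :: 'a poly) + degree (shift_poly (a (J - j)) (int j - int J))"
    by (rule degree_mult_le)
  also have "\<dots> \<le> dL a J"
    using degree_le_dL[of "J - j" J a] by (simp add: of_nat_poly)
  finally show "degree (of_nat (j choose k) * shift_poly (a (J - j)) (int j - int J)) \<le> dL a J" .
qed simp

lemma bcoef_eq_shift_poly:
  assumes "k \<le> J" and "\<And>j. k < j \<Longrightarrow> j \<le> J \<Longrightarrow> a (J - j) = 0"
  shows "bcoef a J k = shift_poly (a (J - k)) (int k - int J)"
proof -
  have "bcoef a J k = (\<Sum>j\<in>{k}. of_nat (j choose k) * shift_poly (a (J - j)) (int j - int J))"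
    unfolding bcoef_def
    by (rule sum.mono_neutral_right) (use assms in \<open>auto simp: shift_poly_def\<close>)
  then show ?thesis by simp
qed

lemma bcoef_nonzero_exists:
  fixes a :: "nat \<Rightarrow> 'a::idom poly"
  assumes "\<exists>i\<le>J. a i \<noteq> 0"
  shows "\<exists>k\<le>J. bcoef a J k \<noteq> 0"
proof -
  define T where "T = {j. j \<le> J \<and> a (J - j) \<noteq> 0}"
  define m where "m = Max T"
  obtain i where "i \<le> J" "a i \<noteq> 0" using assms by blast
  then have "J - i \<in> T" by (simp add: T_def)
  moreover have "finite T" by (simp add: T_def)
  ultimately have "m \<in> T" and above_m: "\<And>j. j \<in> T \<Longrightarrow> j \<le> m"
    unfolding m_def using Max_in Max_ge by blast+
  then have "m \<le> J" "a (J - m) \<noteq> 0" by (simp_all add: T_def)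
  have "a (J - j) = 0" if "m < j" "j \<le> J" for j
  proof (rule ccontr)
    assume "a (J - j) \<noteq> 0"
    with \<open>j \<le> J\<close> have "j \<in> T" by (simp add: T_def)
    with above_m \<open>m < j\<close> show False by fastforce
  qed
  then have "bcoef a J m = shift_poly (a (J - m)) (int m - int J)"
    using \<open>m \<le> J\<close> by (intro bcoef_eq_shift_poly)
  with \<open>m \<le> J\<close> \<open>a (J - m) \<noteq> 0\<close> show ?thesis by auto
qed

lemma degL_attained:
  assumes "\<exists>k\<le>J. bcoef a J k \<noteq> 0"
  obtains k where "k \<le> J" "bcoef a J k \<noteq> 0" "degL a J = int (degree (bcoef a J k)) - int k"
proof -
  let ?S = "{int (degree (bcoef a J k)) - int k | k. k \<le> J \<and> bcoef a J k \<noteq> 0}"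
  have "Max ?S \<in> ?S" by (rule Max_in) (use assms in auto)
  then show ?thesis using that by (auto simp: degL_def)
qed

lemma degL_le_dL:
  fixes a :: "nat \<Rightarrow> 'a::idom poly"
  assumes "\<exists>k\<le>J. bcoef a J k \<noteq> 0"
  shows "degL a J \<le> int (dL a J)"
proof (rule degL_attained[OF assms])
  fix k assume "degL a J = int (degree (bcoef a J k)) - int k"
  with degree_bcoef_le_dL[of a J k] show ?thesis by linarith
qed

lemma degree_bcoef_0_eq_dL:
  fixes a :: "nat \<Rightarrow> 'a::idom poly"
  assumes "\<exists>k\<le>J. bcoef a J k \<noteq> 0" and "degL a J = int (dL a J)"
  shows "bcoef a J 0 \<noteq> 0" and "degree (bcoef a J 0) = dL a J"
proof -
  obtain k where k: "bcoef a J k \<noteq> 0" "degL a J = int (degree (bcoef a J k)) - int k"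
    using degL_attained[OF assms(1)] by blast
  with assms(2) degree_bcoef_le_dL[of a J k] have "k = 0" "degree (bcoef a J k) = dL a J"
    by linarith+
  with k show "bcoef a J 0 \<noteq> 0" and "degree (bcoef a J 0) = dL a J" by simp_all
qed

lemma indicial_eq_coeff_bcoef_0:
  fixes a :: "nat \<Rightarrow> 'a::idom poly"
  assumes "degL a J = int (dL a J)"
  shows "indicial a J s = coeff (bcoef a J 0) (dL a J)"
proof -
  have "coeff_int (bcoef a J k) (degL a J + int k) = coeff (bcoef a J k) (dL a J + k)" for k
    by (simp add: coeff_int_def assms nat_add_distrib)
  moreover have "coeff (bcoef a J k) (dL a J + k) = 0" if "k \<noteq> 0" for k
    using degree_bcoef_le_dL[of a J k] that by (intro coeff_eq_0) simp
  ultimately have "indicial a J s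
      = (\<Sum>k\<in>{0}. coeff_int (bcoef a J k) (degL a J + int k) * falling s k)"
    unfolding indicial_def by (intro sum.mono_neutral_right) auto
  then show ?thesis by (simp add: coeff_int_def assms falling_def)
qed

theorem lemma3p2:
  fixes a :: "nat \<Rightarrow> 'a::field_char_0 poly" and J :: nat
  assumes "\<exists>i\<le>J. a i \<noteq> 0"
  shows "degL a J \<le> int (dL a J) \<and> (degL a J = int (dL a J) \<longrightarrow> nondegenerated a J)"
proof (intro conjI impI)
  have b_nonzero: "\<exists>k\<le>J. bcoef a J k \<noteq> 0"
    using bcoef_nonzero_exists[OF assms] .
  then show "degL a J \<le> int (dL a J)" by (rule degL_le_dL)
  assume deg_eq: "degL a J = int (dL a J)"
  have "indicial a J s = lead_coeff (bcoef a J 0)" for s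
    using indicial_eq_coeff_bcoef_0[OF deg_eq] degree_bcoef_0_eq_dL[OF b_nonzero deg_eq] by simp
  moreover have "lead_coeff (bcoef a J 0) \<noteq> 0"
    using degree_bcoef_0_eq_dL(1)[OF b_nonzero deg_eq] by simp
  ultimately show "nondegenerated a J"
    by (simp add: nondegenerated_def degenerated_def RL_def)
qed

end
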